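(* Let $G=(V,E)$ be a finite, connected, non-bipartite $d$-regular graph. Then $$\beta_{out}(G)\;\geq\;\beta(G)\;\geq\;\tfrac{1}{d}\,\beta_{out}(G).$$
   Context: For $A,B\subseteq V$, $e(A,B)$ denotes the number of ordered pairs $(a,b)\in A\times B$ with $a\sim b$ (so $e(A,A)$ is twice the number of edges inside $A$). For $S\subseteq V$, $\partial(S)$ is the set of edges with exactly one endpoint in $S$, $\partial_{out}(S)$ is the set of vertices not in $S$ having a neighbor in $S$, and $I(S)$ is the number of vertices of $S$ having a neighbor in $S$. For disjoint $L,R\subseteq V$ with $L\cup R\neq\emptyset$, define $$b(L,R)=\frac{e(L,L)+e(R,R)+|\partial(L\cup R)|}{d\,|L\cup R|},\qquad b_{out}(L,R)=\frac{I(L)+I(R)+|\partial_{out}(L\cup R)|}{|L\cup R|}.$$ The bipartiteness constant is $\beta(G)=\min_{L,R} b(L,R)$ and the outer vertex bipartiteness constant is $\beta_{out}(G)=\min_{L,R} b_{out}(L,R)$, both minima over disjoint $L,R$ with $L\cup R\ne\emptyset$. *)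

theory Defs
  imports Main "HOL-Library.Transitive_Closure_Table" Complex_Main
begin

definition simple_graph :: "'a set \<Rightarrow> ('a \<Rightarrow> 'a \<Rightarrow> bool) \<Rightarrow> bool" where
  "simple_graph V E \<longleftrightarrow> finite V \<and> (\<forall>u v. E u v \<longrightarrow> E v u) \<and> (\<forall>u. \<not> E u u)
     \<and> (\<forall>u v. E u v \<longrightarrow> u \<in> V \<and> v \<in> V)"

definition neighbours :: "'a set \<Rightarrow> ('a \<Rightarrow> 'a \<Rightarrow> bool) \<Rightarrow> 'a \<Rightarrow> 'a set" where
  "neighbours V E v = {u \<in> V. E v u}"

definition regular :: "'a set \<Rightarrow> ('a \<Rightarrow> 'a \<Rightarrow> bool) \<Rightarrow> nat \<Rightarrow> bool" where
  "regular V E d \<longleftrightarrow> (\<forall>v\<in>V. card (neighbours V E v) = d)"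

definition connected_graph :: "'a set \<Rightarrow> ('a \<Rightarrow> 'a \<Rightarrow> bool) \<Rightarrow> bool" where
  "connected_graph V E \<longleftrightarrow> V \<noteq> {} \<and> (\<forall>u\<in>V. \<forall>v\<in>V. E\<^sup>*\<^sup>* u v)"

definition bipartite :: "'a set \<Rightarrow> ('a \<Rightarrow> 'a \<Rightarrow> bool) \<Rightarrow> bool" where
  "bipartite V E \<longleftrightarrow> (\<exists>A B. A \<inter> B = {} \<and> A \<union> B = V \<and>
       (\<forall>u v. E u v \<longrightarrow> \<not> (u \<in> A \<and> v \<in> A) \<and> \<not> (u \<in> B \<and> v \<in> B)))"

definition e_pairs :: "('a \<Rightarrow> 'a \<Rightarrow> bool) \<Rightarrow> 'a set \<Rightarrow> 'a set \<Rightarrow> nat" where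
  "e_pairs E A B = card {(a, b). a \<in> A \<and> b \<in> B \<and> E a b}"

text \<open>|boundary(S)|: number of edges with exactly one endpoint in S (each edge counted
once, via its orientation from inside S to outside S).\<close>
definition edge_boundary_card :: "'a set \<Rightarrow> ('a \<Rightarrow> 'a \<Rightarrow> bool) \<Rightarrow> 'a set \<Rightarrow> nat" where
  "edge_boundary_card V E S = card {(a, b). a \<in> S \<and> b \<in> V - S \<and> E a b}"

definition outer_boundary :: "'a set \<Rightarrow> ('a \<Rightarrow> 'a \<Rightarrow> bool) \<Rightarrow> 'a set \<Rightarrow> 'a set" where
  "outer_boundary V E S = {v \<in> V - S. \<exists>u\<in>S. E v u}"

definition inner_count :: "('a \<Rightarrow> 'a \<Rightarrow> bool) \<Rightarrow> 'a set \<Rightarrow> nat" where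
  "inner_count E S = card {v \<in> S. \<exists>u\<in>S. E v u}"

definition b_val :: "'a set \<Rightarrow> ('a \<Rightarrow> 'a \<Rightarrow> bool) \<Rightarrow> nat \<Rightarrow> 'a set \<Rightarrow> 'a set \<Rightarrow> real" where
  "b_val V E d L R =
     real (e_pairs E L L + e_pairs E R R + edge_boundary_card V E (L \<union> R))
       / (real d * real (card (L \<union> R)))"

definition b_out :: "'a set \<Rightarrow> ('a \<Rightarrow> 'a \<Rightarrow> bool) \<Rightarrow> 'a set \<Rightarrow> 'a set \<Rightarrow> real" where
  "b_out V E L R =
     real (inner_count E L + inner_count E R + card (outer_boundary V E (L \<union> R)))
       / real (card (L \<union> R))"

definition admissible_pairs :: "'a set \<Rightarrow> ('a set \<times> 'a set) set" where
  "admissible_pairs V = {(L, R). L \<subseteq> V \<and> R \<subseteq> V \<and> L \<inter> R = {} \<and> L \<union> R \<noteq> {}}"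

definition bipartiteness_const :: "'a set \<Rightarrow> ('a \<Rightarrow> 'a \<Rightarrow> bool) \<Rightarrow> nat \<Rightarrow> real" where
  "bipartiteness_const V E d = Min ((\<lambda>(L, R). b_val V E d L R) ` admissible_pairs V)"

definition outer_bipartiteness_const :: "'a set \<Rightarrow> ('a \<Rightarrow> 'a \<Rightarrow> bool) \<Rightarrow> real" where
  "outer_bipartiteness_const V E = Min ((\<lambda>(L, R). b_out V E L R) ` admissible_pairs V)"

end

theory Submission
  imports Defs
begin

text \<open>Each of the three terms of the numerator of b(L,R) counts a set P of oriented edges,
and the matching term of the numerator of b_out(L,R) counts the endpoints of P on one fixed
side. In a d-regular graph every vertex lies on at most d edges, so the two numerators agree
up to a factor between 1 and d, while the denominators differ by exactly the factor d. Both
inequalities therefore already hold pair by pair and pass to the minima.\<close>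

lemma card_edge_set_le_degree_mult:
  assumes "simple_graph V E" and "regular V E d"
    and "P \<subseteq> {(a, b). E a b}"
  shows "card P \<le> d * card (fst ` P)"
proof -
  have "finite V" and P_sub: "P \<subseteq> V \<times> V"
    using assms(1,3) by (auto simp: simple_graph_def)
  then have "finite (fst ` P)"
    by (meson finite_SigmaI finite_imageI rev_finite_subset)
  have fin_nbrs: "finite (neighbours V E a)" for a
    using \<open>finite V\<close> by (simp add: neighbours_def)
  have "P \<subseteq> Sigma (fst ` P) (neighbours V E)"
    using assms(3) P_sub by (force simp: neighbours_def)
  then have "card P \<le> card (Sigma (fst ` P) (neighbours V E))"
    using \<open>finite (fst ` P)\<close> fin_nbrs by (intro card_mono) auto
  also have "\<dots> = (\<Sum>a\<in>fst ` P. card (neighbours V E a))"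
    using \<open>finite (fst ` P)\<close> fin_nbrs by (simp add: card_SigmaI)
  also have "\<dots> = (\<Sum>a\<in>fst ` P. d)"
    using P_sub assms(2) by (intro sum.cong) (auto simp: regular_def)
  also have "\<dots> = d * card (fst ` P)" by simp
  finally show ?thesis .
qed

lemma card_edge_set_bounds:
  assumes "simple_graph V E" and "regular V E d"
    and "P \<subseteq> {(a, b). E a b}"
  shows "card (fst ` P) \<le> card P \<and> card P \<le> d * card (fst ` P)"
proof -
  have "P \<subseteq> V \<times> V" using assms(1,3) by (auto simp: simple_graph_def)
  then have "finite P"
    using assms(1) by (meson finite_SigmaI rev_finite_subset simple_graph_def)
  then show ?thesis
    using card_image_le card_edge_set_le_degree_mult[OF assms] by blast
qed

lemma inner_count_e_pairs_bounds:
  assumes "simple_graph V E" and "regular V E d"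
  shows "inner_count E S \<le> e_pairs E S S \<and> e_pairs E S S \<le> d * inner_count E S"
proof -
  let ?P = "{(a, b). a \<in> S \<and> b \<in> S \<and> E a b}"
  have tails: "fst ` ?P = {v \<in> S. \<exists>u\<in>S. E v u}" by force
  have "?P \<subseteq> {(a, b). E a b}" by auto
  from card_edge_set_bounds[OF assms this] show ?thesis
    unfolding tails inner_count_def e_pairs_def .
qed

lemma outer_boundary_edge_boundary_bounds:
  assumes "simple_graph V E" and "regular V E d"
  shows "card (outer_boundary V E S) \<le> edge_boundary_card V E S
       \<and> edge_boundary_card V E S \<le> d * card (outer_boundary V E S)"
proof -
  let ?B = "{(a, b). a \<in> S \<and> b \<in> V - S \<and> E a b}"
  have sym: "E u v \<Longrightarrow> E v u" for u v
    using assms(1) by (simp add: simple_graph_def)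
  have "card (prod.swap ` ?B) = card ?B" by (simp add: card_image)
  moreover have "fst ` prod.swap ` ?B = outer_boundary V E S"
    unfolding outer_boundary_def using sym by force
  moreover have "prod.swap ` ?B \<subseteq> {(a, b). E a b}" using sym by auto
  ultimately show ?thesis
    using card_edge_set_bounds[OF assms, of "prod.swap ` ?B"]
    by (simp add: edge_boundary_card_def)
qed

lemma b_numerators_bounds:
  fixes L R :: "'a set"
  assumes "simple_graph V E" and "regular V E d"
  defines "N \<equiv> e_pairs E L L + e_pairs E R R + edge_boundary_card V E (L \<union> R)"
    and "N_out \<equiv> inner_count E L + inner_count E R + card (outer_boundary V E (L \<union> R))"
  shows "N_out \<le> N \<and> N \<le> d * N_out"
  using inner_count_e_pairs_bounds[OF assms(1,2), of L]
    inner_count_e_pairs_bounds[OF assms(1,2), of R]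
    outer_boundary_edge_boundary_bounds[OF assms(1,2), of "L \<union> R"]
  unfolding N_def N_out_def by (auto simp: algebra_simps)

lemma scaled_ratio_bounds:
  fixes x y d n :: real
  assumes "0 \<le> d" and "0 \<le> n" and "0 \<le> y" and "y \<le> x" and "x \<le> d * y"
  shows "x / (d * n) \<le> y / n \<and> y / n / d \<le> x / (d * n)"
proof
  have "x / (d * n) \<le> d * y / (d * n)"
    using assms by (intro divide_right_mono) simp_all
  also have "\<dots> \<le> y / n"
    using assms by (cases "d = 0") simp_all
  finally show "x / (d * n) \<le> y / n" .
  show "y / n / d \<le> x / (d * n)"
    using assms by (simp add: divide_right_mono mult.commute)
qed

lemma b_val_b_out_bounds:
  assumes "simple_graph V E" and "regular V E d"
  shows "b_val V E d L R \<le> b_out V E L R \<and> b_out V E L R / real d \<le> b_val V E d L R"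
  using b_numerators_bounds[OF assms, of L R]
  unfolding b_val_def b_out_def
  by (intro scaled_ratio_bounds) (simp_all del: of_nat_add flip: of_nat_mult)

lemma Min_image_mono:
  fixes f g :: "'a \<Rightarrow> 'b::linorder"
  assumes "finite A" and "A \<noteq> {}" and "\<And>x. x \<in> A \<Longrightarrow> f x \<le> g x"
  shows "Min (f ` A) \<le> Min (g ` A)"
proof -
  have "Min (g ` A) \<in> g ` A" using assms(1,2) by simp
  then obtain x where "x \<in> A" and "Min (g ` A) = g x" by auto
  then have "Min (f ` A) \<le> f x" using assms(1) by simp
  also have "\<dots> \<le> Min (g ` A)" using assms(3) \<open>x \<in> A\<close> \<open>Min (g ` A) = g x\<close> by simp
  finally show ?thesis .
qed

lemma finite_admissible_pairs:
  assumes "finite V"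
  shows "finite (admissible_pairs V)"
proof -
  have "admissible_pairs V \<subseteq> Pow V \<times> Pow V" by (auto simp: admissible_pairs_def)
  then show ?thesis using assms by (meson finite_Pow_iff finite_SigmaI rev_finite_subset)
qed

lemma admissible_pairs_nonempty:
  assumes "V \<noteq> {}"
  shows "admissible_pairs V \<noteq> {}"
proof -
  obtain v where "v \<in> V" using assms by blast
  then have "({v}, {}) \<in> admissible_pairs V" by (simp add: admissible_pairs_def)
  then show ?thesis by blast
qed

theorem theorem2:
  fixes V :: "'a set" and E :: "'a \<Rightarrow> 'a \<Rightarrow> bool" and d :: nat
  assumes "simple_graph V E"
    and "regular V E d"
    and "connected_graph V E"
    and "\<not> bipartite V E"
  shows "outer_bipartiteness_const V E \<ge> bipartiteness_const V E d
       \<and> bipartiteness_const V E d \<ge> outer_bipartiteness_const V E / real d"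
proof -
  let ?A = "admissible_pairs V"
  let ?b = "\<lambda>(L, R). b_val V E d L R"
  let ?b\<^sub>o\<^sub>u\<^sub>t = "\<lambda>(L, R). b_out V E L R"
  have "finite ?A" and "?A \<noteq> {}"
    using assms(1,3) finite_admissible_pairs admissible_pairs_nonempty
    by (auto simp: simple_graph_def connected_graph_def)
  have "Min (?b ` ?A) \<le> Min (?b\<^sub>o\<^sub>u\<^sub>t ` ?A)"
    using \<open>finite ?A\<close> \<open>?A \<noteq> {}\<close> b_val_b_out_bounds[OF assms(1,2)]
    by (intro Min_image_mono) auto
  moreover have "Min (?b\<^sub>o\<^sub>u\<^sub>t ` ?A) / real d = Min ((\<lambda>x. ?b\<^sub>o\<^sub>u\<^sub>t x / real d) ` ?A)"
    using \<open>finite ?A\<close> \<open>?A \<noteq> {}\<close>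
    by (subst mono_Min_commute[where f = "\<lambda>y. y / real d"])
       (auto simp: mono_def divide_right_mono image_comp)
  moreover have "\<dots> \<le> Min (?b ` ?A)"
    using \<open>finite ?A\<close> \<open>?A \<noteq> {}\<close> b_val_b_out_bounds[OF assms(1,2)]
    by (intro Min_image_mono) auto
  ultimately show ?thesis
    by (simp add: bipartiteness_const_def outer_bipartiteness_const_def)
qed

end
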